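(* Let $K$ be a simplicial complex on the vertex set $[m]$ and let $I\subseteq[m]$. Then the fixed point set $(\mathcal{Z}_K)^{T^I}$ is empty if $I\notin K$, and if $I\in K$ it is $\mathbb{Z}_2$-equivariantly homeomorphic to $\mathcal{Z}_{\operatorname{lk}_K(I)}$, where both carry the complex conjugation $\mathbb{Z}_2$-action.
   Context: The moment-angle complex is $\mathcal{Z}_K=\bigcup_{\sigma\in K}\{(z_1,\ldots,z_m)\in(D^2)^m: |z_i|=1\text{ for } i\notin\sigma\}$, where $D^2$ is the closed unit disc in $\mathbb{C}$. The torus $T^m=(S^1)^m$ acts by coordinatewise multiplication and $T^I=\{t\in T^m: t_i=1 \text{ for } i\notin I\}$ acts by restriction; $\mathbb{Z}_2$ acts by coordinatewise complex conjugation. The link of a face $\sigma$ is $\operatorname{lk}_K(\sigma)=\{\tau\in K:\tau\cap\sigma=\varnothing,\ \tau\cup\sigma\in K\}$, regarded as a simplicial complex on the vertex set $[m]\setminus\sigma$, and $\mathcal{Z}_{\operatorname{lk}_K(I)}\subseteq(D^2)^{[m]\setminus I}$ is formed with respect to that vertex set. *)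

theory Defs
  imports "HOL-Analysis.Analysis"
begin

text \<open>Points of (D^2)^V are extensional functions V \<rightarrow> complex (value undefined off V),
  topologised as a subspace of the product topology on complex^V.\<close>

definition simplicial_complex :: "nat set \<Rightarrow> nat set set \<Rightarrow> bool" where
  "simplicial_complex V K \<longleftrightarrow> (\<forall>\<sigma>\<in>K. \<sigma> \<subseteq> V) \<and> (\<forall>\<sigma>\<in>K. \<forall>\<tau>. \<tau> \<subseteq> \<sigma> \<longrightarrow> \<tau> \<in> K)"

definition link :: "nat set set \<Rightarrow> nat set \<Rightarrow> nat set set" where
  "link K \<sigma> = {\<tau> \<in> K. \<tau> \<inter> \<sigma> = {} \<and> \<tau> \<union> \<sigma> \<in> K}"

definition moment_angle :: "nat set \<Rightarrow> nat set set \<Rightarrow> (nat \<Rightarrow> complex) set" where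
  "moment_angle V K =
     (\<Union>\<sigma>\<in>K. {z \<in> Pi\<^sub>E V (\<lambda>_. cball 0 1). \<forall>i \<in> V - \<sigma>. norm (z i) = 1})"

definition ptop :: "nat set \<Rightarrow> (nat \<Rightarrow> complex) topology" where
  "ptop V = product_topology (\<lambda>_. euclidean) V"

definition subtorus :: "nat set \<Rightarrow> nat set \<Rightarrow> (nat \<Rightarrow> complex) set" where
  "subtorus V I = {t \<in> Pi\<^sub>E V (\<lambda>_. sphere 0 1). \<forall>i \<in> V - I. t i = 1}"

definition torus_act :: "nat set \<Rightarrow> (nat \<Rightarrow> complex) \<Rightarrow> (nat \<Rightarrow> complex) \<Rightarrow> (nat \<Rightarrow> complex)" where
  "torus_act V t z = (\<lambda>i\<in>V. t i * z i)"

definition fixed_points :: "nat set \<Rightarrow> nat set \<Rightarrow> (nat \<Rightarrow> complex) set \<Rightarrow> (nat \<Rightarrow> complex) set" where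
  "fixed_points V I X = {z \<in> X. \<forall>t \<in> subtorus V I. torus_act V t z = z}"

definition conj_act :: "nat set \<Rightarrow> (nat \<Rightarrow> complex) \<Rightarrow> (nat \<Rightarrow> complex)" where
  "conj_act V z = (\<lambda>i\<in>V. cnj (z i))"

end

theory Submission
  imports Defs
begin

text \<open>A point of \<open>Z\<^sub>K\<close> is fixed by \<open>T\<^sup>I\<close> exactly when its coordinates in \<open>I\<close> vanish
  (rotating one coordinate by \<open>-1\<close> already forces it to be \<open>0\<close>). A vanishing coordinate is
  not on the unit circle, so it belongs to the face \<open>\<sigma>\<close> witnessing membership in \<open>Z\<^sub>K\<close>;
  hence \<open>I \<subseteq> \<sigma>\<close>, and \<open>I \<in> K\<close> by downward closure. Dropping the zero coordinates turns
  \<open>\<sigma> \<supseteq> I\<close> into the face \<open>\<sigma> - I\<close> of the link, and extending by zero turns a face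
  \<open>\<tau>\<close> of the link into the face \<open>\<tau> \<union> I\<close> of \<open>K\<close>. Restriction to \<open>V - I\<close> and extension
  by zero are mutually inverse continuous maps, and restriction commutes with conjugation.\<close>

lemma fixed_points_moment_angle:
  assumes "I \<subseteq> V"
  shows "fixed_points V I (moment_angle V K) = {z \<in> moment_angle V K. \<forall>i\<in>I. z i = 0}"
proof (intro set_eqI iffI)
  fix z assume z: "z \<in> fixed_points V I (moment_angle V K)"
  have "z i = 0" if "i \<in> I" for i
  proof -
    define t where "t = (\<lambda>j\<in>V. if j = i then -1 else (1::complex))"
    have "t \<in> subtorus V I"
      using \<open>i \<in> I\<close> assms by (auto simp: subtorus_def t_def)
    then have "torus_act V t z i = z i"
      using z by (simp add: fixed_points_def)
    moreover have "torus_act V t z i = - z i"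
      using \<open>i \<in> I\<close> assms by (simp add: torus_act_def t_def subset_iff)
    ultimately show ?thesis by simp
  qed
  then show "z \<in> {z \<in> moment_angle V K. \<forall>i\<in>I. z i = 0}"
    using z by (simp add: fixed_points_def)
next
  fix z assume z: "z \<in> {z \<in> moment_angle V K. \<forall>i\<in>I. z i = 0}"
  then have "z \<in> extensional V"
    by (auto simp: moment_angle_def PiE_def)
  have "torus_act V t z = z" if "t \<in> subtorus V I" for t
  proof
    fix j show "torus_act V t z j = z j"
      using that z \<open>z \<in> extensional V\<close>
      by (cases "j \<in> V"; cases "j \<in> I") (auto simp: torus_act_def subtorus_def extensional_def)
  qed
  then show "z \<in> fixed_points V I (moment_angle V K)"
    using z by (simp add: fixed_points_def)
qed

lemma moment_angle_vanishing_obtains_face: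
  assumes "z \<in> moment_angle V K" and "I \<subseteq> V" and "\<forall>i\<in>I. z i = 0"
  obtains \<sigma> where "\<sigma> \<in> K" and "I \<subseteq> \<sigma>" and "z \<in> Pi\<^sub>E V (\<lambda>_. cball 0 1)"
    and "\<forall>i\<in>V - \<sigma>. norm (z i) = 1"
proof -
  from assms(1) obtain \<sigma> where \<sigma>: "\<sigma> \<in> K" "z \<in> Pi\<^sub>E V (\<lambda>_. cball 0 1)"
    "\<forall>i\<in>V - \<sigma>. norm (z i) = 1"
    unfolding moment_angle_def by blast
  have "I \<subseteq> \<sigma>"
  proof
    fix i assume "i \<in> I"
    with assms(2,3) \<sigma>(3) show "i \<in> \<sigma>"
      by (metis DiffI norm_zero subsetD zero_neq_one)
  qed
  with \<sigma> that show thesis by blast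
qed

lemma fixed_points_moment_angle_empty:
  assumes "simplicial_complex V K" and "I \<subseteq> V" and "I \<notin> K"
  shows "fixed_points V I (moment_angle V K) = {}"
proof (intro equals0I)
  fix z assume "z \<in> fixed_points V I (moment_angle V K)"
  then have z: "z \<in> moment_angle V K" and z0: "\<forall>i\<in>I. z i = 0"
    by (simp_all add: fixed_points_moment_angle[OF assms(2)])
  obtain \<sigma> where "\<sigma> \<in> K" "I \<subseteq> \<sigma>"
    using moment_angle_vanishing_obtains_face[OF z assms(2) z0] by metis
  then have "I \<in> K"
    using assms(1) unfolding simplicial_complex_def by blast
  with assms(3) show False ..
qed

lemma restrict_mem_moment_angle_link:
  assumes "simplicial_complex V K" and "I \<subseteq> V"
    and "z \<in> moment_angle V K" and "\<forall>i\<in>I. z i = 0"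
  shows "restrict z (V - I) \<in> moment_angle (V - I) (link K I)"
proof -
  obtain \<sigma> where \<sigma>: "\<sigma> \<in> K" "I \<subseteq> \<sigma>" "z \<in> Pi\<^sub>E V (\<lambda>_. cball 0 1)"
    "\<forall>i\<in>V - \<sigma>. norm (z i) = 1"
    by (rule moment_angle_vanishing_obtains_face[OF assms(3,2,4)])
  have "\<sigma> - I \<in> link K I"
    using \<sigma>(1,2) assms(1) by (auto simp: link_def simplicial_complex_def Un_absorb2)
  moreover have "restrict z (V - I) \<in> Pi\<^sub>E (V - I) (\<lambda>_. cball 0 1)"
    using \<sigma>(3) by auto
  moreover have "\<forall>i\<in>(V - I) - (\<sigma> - I). norm (restrict z (V - I) i) = 1"
    using \<sigma>(4) by auto
  ultimately show ?thesis
    unfolding moment_angle_def by blast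
qed

lemma zero_extend_mem_moment_angle:
  assumes "I \<subseteq> V" and "w \<in> moment_angle (V - I) (link K I)"
  shows "(\<lambda>i. if i \<in> I then 0 else w i) \<in> moment_angle V K"
proof -
  from assms(2) obtain \<tau> where \<tau>: "\<tau> \<in> link K I" "w \<in> Pi\<^sub>E (V - I) (\<lambda>_. cball 0 1)"
    "\<forall>i\<in>(V - I) - \<tau>. norm (w i) = 1"
    unfolding moment_angle_def by blast
  have "\<tau> \<union> I \<in> K"
    using \<tau>(1) by (simp add: link_def)
  moreover have "(\<lambda>i. if i \<in> I then 0 else w i) \<in> Pi\<^sub>E V (\<lambda>_. cball 0 1)"
    using \<tau>(2) assms(1) by (auto simp: PiE_def Pi_def extensional_def)
  moreover have "\<forall>i\<in>V - (\<tau> \<union> I). norm (if i \<in> I then 0 else w i) = 1"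
    using \<tau>(3) by auto
  ultimately show ?thesis
    unfolding moment_angle_def by blast
qed

lemma continuous_map_extend_const:
  assumes "I \<subseteq> V" and "\<And>i. i \<in> I \<Longrightarrow> c \<in> topspace (X i)"
  shows "continuous_map (product_topology X (V - I)) (product_topology X V)
           (\<lambda>w i. if i \<in> I then c else w i)"
proof (subst continuous_map_componentwise, intro conjI ballI)
  show "(\<lambda>w i. if i \<in> I then c else w i) ` topspace (product_topology X (V - I)) \<subseteq> extensional V"
    using assms(1) by (auto simp: extensional_def)
next
  fix k assume "k \<in> V"
  then show "continuous_map (product_topology X (V - I)) (X k) (\<lambda>w. if k \<in> I then c else w k)"
    by (cases "k \<in> I") (simp_all add: assms(2) continuous_map_product_projection)
qed

lemma homeomorphic_map_restrict_fixed_points_link: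
  assumes "simplicial_complex V K" and "I \<subseteq> V"
  shows "homeomorphic_map
           (subtopology (ptop V) (fixed_points V I (moment_angle V K)))
           (subtopology (ptop (V - I)) (moment_angle (V - I) (link K I)))
           (\<lambda>z. restrict z (V - I))"
proof -
  define A where "A = fixed_points V I (moment_angle V K)"
  have A_eq: "A = {z \<in> moment_angle V K. \<forall>i\<in>I. z i = 0}"
    unfolding A_def by (rule fixed_points_moment_angle[OF assms(2)])
  define B where "B = moment_angle (V - I) (link K I)"
  define g where "g = (\<lambda>w::nat \<Rightarrow> complex. \<lambda>i. if i \<in> I then 0 else w i)"
  have restrict_A: "restrict z (V - I) \<in> B" if "z \<in> A" for z
    using restrict_mem_moment_angle_link[OF assms] that by (simp add: A_eq B_def)
  have g_B: "g w \<in> A" if "w \<in> B" for w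
    using zero_extend_mem_moment_angle[OF assms(2)] that by (simp add: A_eq B_def g_def)
  have g_restrict: "g (restrict z (V - I)) = z" if "z \<in> A" for z
  proof
    fix i
    have "z \<in> extensional V" "\<forall>i\<in>I. z i = 0"
      using that by (auto simp: A_eq moment_angle_def PiE_def)
    then show "g (restrict z (V - I)) i = z i"
      by (auto simp: g_def extensional_def)
  qed
  have restrict_g: "restrict (g w) (V - I) = w" if "w \<in> B" for w
  proof
    fix i
    have "w \<in> extensional (V - I)"
      using that by (auto simp: B_def moment_angle_def PiE_def)
    then show "restrict (g w) (V - I) i = w i"
      by (auto simp: g_def extensional_def)
  qed
  have "continuous_map (subtopology (ptop V) A) (subtopology (ptop (V - I)) B)
          (\<lambda>z. restrict z (V - I))"
  proof (rule continuous_map_into_subtopology)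
    show "continuous_map (subtopology (ptop V) A) (ptop (V - I)) (\<lambda>z. restrict z (V - I))"
      unfolding ptop_def by (intro continuous_map_from_subtopology continuous_on_restrict) blast
    show "(\<lambda>z. restrict z (V - I)) \<in> topspace (subtopology (ptop V) A) \<rightarrow> B"
      using restrict_A by auto
  qed
  moreover have "continuous_map (subtopology (ptop (V - I)) B) (subtopology (ptop V) A) g"
  proof (rule continuous_map_into_subtopology)
    show "continuous_map (subtopology (ptop (V - I)) B) (ptop V) g"
      unfolding ptop_def g_def
      by (intro continuous_map_from_subtopology continuous_map_extend_const[OF assms(2)]) simp
    show "g \<in> topspace (subtopology (ptop (V - I)) B) \<rightarrow> A"
      using g_B by auto
  qed
  ultimately have "homeomorphic_maps (subtopology (ptop V) A) (subtopology (ptop (V - I)) B)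
                     (\<lambda>z. restrict z (V - I)) g"
    unfolding homeomorphic_maps_def using g_restrict restrict_g by simp
  then show ?thesis
    unfolding A_def B_def homeomorphic_map_maps by blast
qed

lemma restrict_conj_act:
  assumes "W \<subseteq> V"
  shows "restrict (conj_act V z) W = conj_act W (restrict z W)"
  using assms by (auto simp: conj_act_def fun_eq_iff)

theorem lemma3p5:
  fixes m :: nat and K :: "nat set set" and I :: "nat set"
  assumes "simplicial_complex {1..m} K"
    and "I \<subseteq> {1..m}"
  shows "(I \<notin> K \<longrightarrow> fixed_points {1..m} I (moment_angle {1..m} K) = {})
       \<and> (I \<in> K \<longrightarrow>
          (\<exists>f. homeomorphic_map
                 (subtopology (ptop {1..m}) (fixed_points {1..m} I (moment_angle {1..m} K)))
                 (subtopology (ptop ({1..m} - I)) (moment_angle ({1..m} - I) (link K I))) f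
             \<and> (\<forall>z \<in> fixed_points {1..m} I (moment_angle {1..m} K).
                   f (conj_act {1..m} z) = conj_act ({1..m} - I) (f z))))"
proof -
  let ?f = "\<lambda>z. restrict z ({1..m} - I)"
  have "?f (conj_act {1..m} z) = conj_act ({1..m} - I) (?f z)" for z
    by (simp add: restrict_conj_act)
  then show ?thesis
    using fixed_points_moment_angle_empty[OF assms]
      homeomorphic_map_restrict_fixed_points_link[OF assms]
    by blast
qed

end
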